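(* Let $I$ be a stable matching instance with $k$-range preferences and $n$ men and $n$ women. Then each agent in $I$ has at most $5k - 4$ stable partners. In particular, each agent can appear in at most $5k - 5$ rotations.
   Context: An SM instance $I$ has men and women with complete strict preference lists; $P_a(b)$ is the rank $a$ assigns $b$. For an agent $a$, $\min\mathrm{rank}(a)$ and $\max\mathrm{rank}(a)$ are the minimum and maximum of $P_b(a)$ over agents $b$ of the opposite sex; $I$ has $k$-range preferences if $\max\mathrm{rank}(a) - \min\mathrm{rank}(a) \leq k-1$ for all $a$. A stable partner of $a$ is an agent matched to $a$ in some stable matching. A rotation of $I$ is a circular list $(m_1,w_1),\ldots,(m_\ell,w_\ell)$ of pairs of some stable matching $\mu$ such that $w_{i+1}$ is the first woman after $w_i$ on $m_i$'s list who prefers $m_i$ to her partner $m_{i+1}$ in $\mu$. *)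

theory Defs
  imports Main
begin

text \<open>Men and women are both represented by 0..<n. A preference profile P assigns to
  every agent a (below n) a bijection P a from the agents of the opposite sex {..<n}
  onto the ranks {1..n}: P a b is the rank that a assigns to b (smaller = better).\<close>

definition pref_profile :: "nat \<Rightarrow> (nat \<Rightarrow> nat \<Rightarrow> nat) \<Rightarrow> bool" where
  "pref_profile n P \<longleftrightarrow> (\<forall>a<n. bij_betw (P a) {..<n} {1..n})"

definition minrank_man :: "nat \<Rightarrow> (nat \<Rightarrow> nat \<Rightarrow> nat) \<Rightarrow> nat \<Rightarrow> nat" where
  "minrank_man n pw m = Min ((\<lambda>w. pw w m) ` {..<n})"
definition maxrank_man :: "nat \<Rightarrow> (nat \<Rightarrow> nat \<Rightarrow> nat) \<Rightarrow> nat \<Rightarrow> nat" where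
  "maxrank_man n pw m = Max ((\<lambda>w. pw w m) ` {..<n})"
definition minrank_woman :: "nat \<Rightarrow> (nat \<Rightarrow> nat \<Rightarrow> nat) \<Rightarrow> nat \<Rightarrow> nat" where
  "minrank_woman n pm w = Min ((\<lambda>m. pm m w) ` {..<n})"
definition maxrank_woman :: "nat \<Rightarrow> (nat \<Rightarrow> nat \<Rightarrow> nat) \<Rightarrow> nat \<Rightarrow> nat" where
  "maxrank_woman n pm w = Max ((\<lambda>m. pm m w) ` {..<n})"

definition k_range :: "nat \<Rightarrow> (nat \<Rightarrow> nat \<Rightarrow> nat) \<Rightarrow> (nat \<Rightarrow> nat \<Rightarrow> nat) \<Rightarrow> nat \<Rightarrow> bool" where
  "k_range n pm pw k \<longleftrightarrow>
     (\<forall>m<n. int (maxrank_man n pw m) - int (minrank_man n pw m) \<le> int k - 1) \<and>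
     (\<forall>w<n. int (maxrank_woman n pm w) - int (minrank_woman n pm w) \<le> int k - 1)"

text \<open>A (perfect) matching: mu m is the partner of man m; a bijection men -> women.\<close>
definition matching :: "nat \<Rightarrow> (nat \<Rightarrow> nat) \<Rightarrow> bool" where
  "matching n mu \<longleftrightarrow> bij_betw mu {..<n} {..<n}"

definition wpartner :: "nat \<Rightarrow> (nat \<Rightarrow> nat) \<Rightarrow> nat \<Rightarrow> nat" where
  "wpartner n mu w = inv_into {..<n} mu w"

definition blocking :: "nat \<Rightarrow> (nat \<Rightarrow> nat \<Rightarrow> nat) \<Rightarrow> (nat \<Rightarrow> nat \<Rightarrow> nat) \<Rightarrow> (nat \<Rightarrow> nat)
    \<Rightarrow> nat \<Rightarrow> nat \<Rightarrow> bool" where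
  "blocking n pm pw mu m w \<longleftrightarrow> m < n \<and> w < n \<and>
     pm m w < pm m (mu m) \<and> pw w m < pw w (wpartner n mu w)"

definition stable :: "nat \<Rightarrow> (nat \<Rightarrow> nat \<Rightarrow> nat) \<Rightarrow> (nat \<Rightarrow> nat \<Rightarrow> nat) \<Rightarrow> (nat \<Rightarrow> nat) \<Rightarrow> bool" where
  "stable n pm pw mu \<longleftrightarrow> matching n mu \<and> (\<nexists>m w. blocking n pm pw mu m w)"

definition stable_partners_man :: "nat \<Rightarrow> (nat \<Rightarrow> nat \<Rightarrow> nat) \<Rightarrow> (nat \<Rightarrow> nat \<Rightarrow> nat) \<Rightarrow> nat \<Rightarrow> nat set" where
  "stable_partners_man n pm pw m = {w. \<exists>mu. stable n pm pw mu \<and> mu m = w}"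

definition stable_partners_woman :: "nat \<Rightarrow> (nat \<Rightarrow> nat \<Rightarrow> nat) \<Rightarrow> (nat \<Rightarrow> nat \<Rightarrow> nat) \<Rightarrow> nat \<Rightarrow> nat set" where
  "stable_partners_woman n pm pw w = {m. m < n \<and> (\<exists>mu. stable n pm pw mu \<and> mu m = w)}"

text \<open>ps = [(m_1,w_1),...,(m_l,w_l)] (indices read cyclically) is a rotation exposed in the
  stable matching mu: its pairs are distinct pairs of mu and w_{i+1} is the first woman after
  w_i on m_i's list who prefers m_i to her partner (m_{i+1}) in mu.\<close>
definition rotation_in :: "nat \<Rightarrow> (nat \<Rightarrow> nat \<Rightarrow> nat) \<Rightarrow> (nat \<Rightarrow> nat \<Rightarrow> nat) \<Rightarrow> (nat \<Rightarrow> nat)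
    \<Rightarrow> (nat \<times> nat) list \<Rightarrow> bool" where
  "rotation_in n pm pw mu ps \<longleftrightarrow> stable n pm pw mu \<and> ps \<noteq> [] \<and> distinct (map fst ps) \<and>
     (\<forall>i<length ps. fst (ps ! i) < n \<and> mu (fst (ps ! i)) = snd (ps ! i)) \<and>
     (\<forall>i<length ps.
        let m = fst (ps ! i); w = snd (ps ! i); w' = snd (ps ! (Suc i mod length ps)) in
          pm m w < pm m w' \<and> pw w' m < pw w' (wpartner n mu w') \<and>
          (\<forall>v<n. pm m w < pm m v \<and> pw v m < pw v (wpartner n mu v) \<longrightarrow> pm m w' \<le> pm m v))"

text \<open>A rotation, identified with its set of pairs (the circular list up to rotation).\<close>
definition rotation :: "nat \<Rightarrow> (nat \<Rightarrow> nat \<Rightarrow> nat) \<Rightarrow> (nat \<Rightarrow> nat \<Rightarrow> nat) \<Rightarrow> (nat \<times> nat) set \<Rightarrow> bool" where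
  "rotation n pm pw R \<longleftrightarrow> (\<exists>mu ps. rotation_in n pm pw mu ps \<and> set ps = R)"

end

theory Submission
  imports Defs
begin

text \<open>Write a(m) for the best rank any woman gives to the man m. With k-range preferences
  every woman ranks m within a(m) + k - 1, so a fixed woman ranks all men u with a(u) \<le> c
  among her first c + k - 1 places, and there are at most that many such men. In a stable
  matching, every woman whom m prefers to his partner is matched to a man she prefers to m, whose
  minimal rank is therefore at most a(m) + k - 2; counting these women shows that m ranks his
  partner at most a(m) + 2k - 2. The same bound for the partner woman, read from her side, gives
  the lower bound a(m) - 2k + 2, so the stable partners of m occupy a window of 4k - 3 ranks.

  The woman following m in a rotation obeys the same upper bound (the women m ranks above her
  are his partner or are matched to men they prefer to m), so the pairs of rotations through m,
  and likewise through a woman, lie in windows of 4k - 4 ranks. Distinct rotations share no pair: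
  two rotations with a common pair are both exposed in the men-worse meet of their two stable
  matchings, where each man of a rotation determines the next. For k = 1 there are no rotations,
  as a(m) would strictly increase around the cycle. Hence the bounds 4k - 3 and 4k - 4, which
  are at most 5k - 4 and 5k - 5.\<close>

section \<open>Preference profiles\<close>

lemma pref_rank_inj:
  assumes "pref_profile n P" "a < n" "b < n" "b' < n" "P a b = P a b'"
  shows "b = b'"
  using assms unfolding pref_profile_def bij_betw_def by (auto dest: inj_onD)

lemma pref_rank_less:
  assumes "pref_profile n P" "a < n" "b < n" "b' < n" "P a b \<le> P a b'" "b \<noteq> b'"
  shows "P a b < P a b'"
  using assms pref_rank_inj[OF assms(1-4)] by fastforce

lemma pref_rank_range:
  assumes "pref_profile n P" "a < n" "b < n"
  shows "1 \<le> P a b" "P a b \<le> n"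
  using assms bij_betw_apply unfolding pref_profile_def by fastforce+

lemma card_pref_rank_in:
  assumes "pref_profile n P" "a < n" "finite W"
  shows "card {b. b < n \<and> P a b \<in> W} \<le> card W"
proof (rule card_inj_on_le[of "P a"])
  show "inj_on (P a) {b. b < n \<and> P a b \<in> W}"
    using pref_rank_inj[OF assms(1,2)] by (auto intro: inj_onI)
qed (use assms(3) in auto)

lemma card_pref_rank_less:
  assumes "pref_profile n P" "a < n" "r \<le> Suc n"
  shows "card {b. b < n \<and> P a b < r} = r - 1"
proof -
  let ?S = "{b. b < n \<and> P a b < r}"
  have onto: "P a ` {..<n} = {1..n}"
    using assms(1,2) unfolding pref_profile_def bij_betw_def by auto
  have "P a ` ?S = {1..<r}"
  proof
    show "P a ` ?S \<subseteq> {1..<r}" using pref_rank_range[OF assms(1,2)] by auto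
    show "{1..<r} \<subseteq> P a ` ?S"
    proof
      fix y assume y: "y \<in> {1..<r}"
      then have "y \<in> P a ` {..<n}" using onto assms(3) by auto
      with y show "y \<in> P a ` ?S" by auto
    qed
  qed
  moreover have "inj_on (P a) ?S"
    using pref_rank_inj[OF assms(1,2)] by (auto intro: inj_onI)
  ultimately show ?thesis
    using card_image by fastforce
qed

lemma minrank_man_le: "v < n \<Longrightarrow> minrank_man n P x \<le> P v x"
  unfolding minrank_man_def by (rule Min_le) auto

lemma minrank_man_pos:
  assumes "pref_profile n P" "x < n"
  shows "1 \<le> minrank_man n P x"
  using assms pref_rank_range unfolding minrank_man_def by (subst Min_ge_iff) auto

section \<open>Matchings and stability\<close>

context
  fixes n :: nat and mu :: "nat \<Rightarrow> nat"
  assumes mu: "matching n mu"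
begin

lemma matching_less: "x < n \<Longrightarrow> mu x < n"
  using mu bij_betw_apply unfolding matching_def by fastforce

lemma wpartner_less: "v < n \<Longrightarrow> wpartner n mu v < n"
  using mu unfolding matching_def wpartner_def by (metis bij_betw_def inv_into_into lessThan_iff)

lemma matching_wpartner: "v < n \<Longrightarrow> mu (wpartner n mu v) = v"
  using mu unfolding matching_def wpartner_def by (metis bij_betw_def f_inv_into_f lessThan_iff)

lemma wpartner_matching: "x < n \<Longrightarrow> wpartner n mu (mu x) = x"
  using mu unfolding matching_def wpartner_def by (metis bij_betw_def inv_into_f_f lessThan_iff)

lemma matching_eq_iff: "x < n \<Longrightarrow> y < n \<Longrightarrow> mu x = mu y \<longleftrightarrow> x = y"
  using wpartner_matching by metis

lemma matching_inj_on: "inj_on mu {..<n}"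
  using mu unfolding matching_def by (rule bij_betw_imp_inj_on)

lemma matching_inverse: "matching n (wpartner n mu)"
  using mu unfolding matching_def wpartner_def by (rule bij_betw_inv_into)

lemma wpartner_wpartner: "x < n \<Longrightarrow> wpartner n (wpartner n mu) x = mu x"
  using mu unfolding matching_def wpartner_def by (simp add: inv_into_inv_into_eq)

end

lemma stable_matching: "stable n pm pw mu \<Longrightarrow> matching n mu"
  unfolding stable_def by auto

lemma stable_no_blocking:
  assumes "stable n pm pw mu" "x < n" "v < n" "pm x v < pm x (mu x)"
  shows "pw v (wpartner n mu v) \<le> pw v x"
  using assms unfolding stable_def blocking_def by force

lemma stable_swap:
  assumes "stable n pm pw mu"
  shows "stable n pw pm (wpartner n mu)"
proof -
  have mu: "matching n mu" using assms by (rule stable_matching)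
  have "blocking n pm pw mu m w" if "blocking n pw pm (wpartner n mu) w m" for m w
    using that unfolding blocking_def by (auto simp: wpartner_wpartner[OF mu])
  with assms show ?thesis
    unfolding stable_def by (auto simp: matching_inverse[OF mu])
qed

lemma stable_partners_woman_swap:
  assumes "w < n"
  shows "stable_partners_woman n pm pw w = stable_partners_man n pw pm w"
proof (intro set_eqI iffI)
  fix m assume "m \<in> stable_partners_woman n pm pw w"
  then obtain mu where mu: "stable n pm pw mu" "m < n" "mu m = w"
    unfolding stable_partners_woman_def by blast
  have "wpartner n mu w = m"
    using mu wpartner_matching[OF stable_matching] by blast
  with stable_swap[OF mu(1)] show "m \<in> stable_partners_man n pw pm w"
    unfolding stable_partners_man_def by blast
next
  fix m assume "m \<in> stable_partners_man n pw pm w"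
  then obtain nu where nu: "stable n pw pm nu" "nu w = m"
    unfolding stable_partners_man_def by auto
  have "matching n nu" using nu(1) by (rule stable_matching)
  then have "m < n" "wpartner n nu m = w"
    using nu(2) assms matching_less wpartner_matching by auto
  with stable_swap[OF nu(1)] show "m \<in> stable_partners_woman n pm pw w"
    unfolding stable_partners_woman_def by auto
qed

locale sm_instance =
  fixes n :: nat and pm pw :: "nat \<Rightarrow> nat \<Rightarrow> nat"
  assumes pref_men: "pref_profile n pm" and pref_women: "pref_profile n pw"
begin

lemmas pm_inj = pref_rank_inj[OF pref_men]
lemmas pm_less = pref_rank_less[OF pref_men]
lemmas pw_less = pref_rank_less[OF pref_women]

end

section \<open>The men-worse meet of two stable matchings\<close>

definition men_worse :: "(nat \<Rightarrow> nat \<Rightarrow> nat) \<Rightarrow> (nat \<Rightarrow> nat) \<Rightarrow> (nat \<Rightarrow> nat) \<Rightarrow> nat \<Rightarrow> nat" where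
  "men_worse pm mu mu' x = (if pm x (mu x) \<le> pm x (mu' x) then mu' x else mu x)"

lemma men_worse_cases: "men_worse pm mu mu' x = mu x \<or> men_worse pm mu mu' x = mu' x"
  unfolding men_worse_def by auto

lemma men_worse_rank:
  "pm x (mu x) \<le> pm x (men_worse pm mu mu' x)" "pm x (mu' x) \<le> pm x (men_worse pm mu mu' x)"
  unfolding men_worse_def by auto

context sm_instance
begin

lemma better_men_same_women:
  assumes st: "stable n pm pw mu" and st': "stable n pm pw mu'"
  shows "mu ` {x. x < n \<and> pm x (mu x) < pm x (mu' x)}
    = mu' ` {x. x < n \<and> pm x (mu x) < pm x (mu' x)}"
    (is "mu ` ?P = mu' ` ?P")
proof -
  have mu: "matching n mu" and mu': "matching n mu'"
    using st st' by (auto intro: stable_matching)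
  have "mu ` ?P \<subseteq> mu' ` ?P"
  proof
    fix v assume "v \<in> mu ` ?P"
    then obtain x where x: "x < n" "pm x (mu x) < pm x (mu' x)" and v_eq: "mu x = v" by auto
    define y where "y = wpartner n mu' v"
    have v: "v < n" using matching_less[OF mu x(1)] v_eq by simp
    have y: "y < n" "mu' y = v"
      unfolding y_def using wpartner_less[OF mu' v] matching_wpartner[OF mu' v] by auto
    have "y \<noteq> x" using x(2) y(2) v_eq by auto
    moreover have "pw v y \<le> pw v x"
      using stable_no_blocking[OF st' x(1) v] x(2) v_eq y_def by simp
    ultimately have "pw v y < pw v x" using pw_less[OF v y(1) x(1)] by simp
    moreover have "wpartner n mu v = x" using wpartner_matching[OF mu x(1)] v_eq by simp
    ultimately have "\<not> pm y v < pm y (mu y)" using stable_no_blocking[OF st y(1) v] by fastforce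
    moreover have "mu y \<noteq> v" using matching_eq_iff[OF mu y(1) x(1)] v_eq \<open>y \<noteq> x\<close> by simp
    ultimately have "pm y (mu y) < pm y (mu' y)"
      using pm_less[OF y(1) matching_less[OF mu y(1)] v] y(2) by simp
    with y show "v \<in> mu' ` ?P" by (intro image_eqI[of _ _ y]) auto
  qed
  moreover have "card (mu ` ?P) = card (mu' ` ?P)"
    using inj_on_subset[OF matching_inj_on[OF mu]] inj_on_subset[OF matching_inj_on[OF mu']]
    by (simp add: card_image subset_eq)
  ultimately show ?thesis by (intro card_subset_eq) auto
qed

lemma men_worse_inj:
  assumes st: "stable n pm pw mu" and st': "stable n pm pw mu'"
  shows "inj_on (men_worse pm mu mu') {..<n}"
proof -
  let ?X = "men_worse pm mu mu'"
  let ?P = "{x. x < n \<and> pm x (mu' x) < pm x (mu x)}"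
  let ?Q = "{x. x < n \<and> pm x (mu x) \<le> pm x (mu' x)}"
  have mu: "matching n mu" and mu': "matching n mu'"
    using st st' by (auto intro: stable_matching)
  have on_P: "?X x = mu x" if "x \<in> ?P" for x
    using that unfolding men_worse_def by auto
  have on_Q: "?X x = mu' x" if "x \<in> ?Q" for x
    using that unfolding men_worse_def by auto
  have disjoint: "?P \<inter> ?Q = {}" by auto
  have "?X ` ?P = mu ` ?P"
    using on_P by (intro image_cong) auto
  also have "\<dots> = mu' ` ?P"
    using better_men_same_women[OF st' st] by simp
  finally have X_P: "?X ` ?P = mu' ` ?P" .
  have X_Q: "?X ` ?Q = mu' ` ?Q"
    using on_Q by (intro image_cong) auto
  have "?X ` ?P \<inter> ?X ` ?Q = mu' ` (?P \<inter> ?Q)"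
    unfolding X_P X_Q by (rule inj_on_image_Int[OF matching_inj_on[OF mu'], symmetric]) auto
  then have "?X ` ?P \<inter> ?X ` ?Q = {}"
    using disjoint by simp
  moreover have "inj_on ?X ?P"
  proof -
    have "inj_on mu ?P" by (rule inj_on_subset[OF matching_inj_on[OF mu]]) auto
    moreover have "inj_on ?X ?P = inj_on mu ?P" by (rule inj_on_cong) (rule on_P)
    ultimately show ?thesis by simp
  qed
  moreover have "inj_on ?X ?Q"
  proof -
    have "inj_on mu' ?Q" by (rule inj_on_subset[OF matching_inj_on[OF mu']]) auto
    moreover have "inj_on ?X ?Q = inj_on mu' ?Q" by (rule inj_on_cong) (rule on_Q)
    ultimately show ?thesis by simp
  qed
  ultimately have "inj_on ?X (?P \<union> ?Q)"
    using disjoint by (simp add: inj_on_Un Diff_triv Int_commute)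
  moreover have "{..<n} = ?P \<union> ?Q" by auto
  ultimately show ?thesis by simp
qed

lemma men_worse_matching:
  assumes st: "stable n pm pw mu" and st': "stable n pm pw mu'"
  shows "matching n (men_worse pm mu mu')"
proof -
  have "men_worse pm mu mu' x < n" if "x < n" for x
    using men_worse_cases[of pm mu mu' x] matching_less[OF stable_matching[OF st] that]
      matching_less[OF stable_matching[OF st'] that] by auto
  then have "men_worse pm mu mu' ` {..<n} \<subseteq> {..<n}" by auto
  then have "men_worse pm mu mu' ` {..<n} = {..<n}"
    using men_worse_inj[OF st st'] by (intro endo_inj_surj) auto
  then show ?thesis
    unfolding matching_def bij_betw_def using men_worse_inj[OF st st'] by simp
qed

lemma not_blocked_by_worse_partner:
  assumes st: "stable n pm pw mu" and st': "stable n pm pw mu'"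
    and x: "x < n" and v: "v < n" and y: "y < n"
    and x_prefers: "pm x v < pm x (mu x)" and v_prefers: "pw v x < pw v y"
    and y_matched: "mu y = v \<or> mu' y = v" and y_worse: "pm y (mu y) \<le> pm y v"
  shows False
proof -
  have mu: "matching n mu" and mu': "matching n mu'"
    using st st' by (auto intro: stable_matching)
  define z where "z = wpartner n mu v"
  have z: "z < n" "mu z = v"
    unfolding z_def using wpartner_less[OF mu v] matching_wpartner[OF mu v] by auto
  have zx: "pw v z \<le> pw v x" using stable_no_blocking[OF st x v x_prefers] z_def by simp
  then have "y \<noteq> z" using v_prefers by auto
  then have "mu y \<noteq> v" using matching_eq_iff[OF mu y z(1)] z(2) by simp
  then have y': "mu' y = v" using y_matched by simp
  with \<open>mu y \<noteq> v\<close> have "pm y (mu y) < pm y (mu' y)"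
    using y_worse pm_less[OF y matching_less[OF mu y] v] by simp
  with y y' have "v \<in> mu' ` {x. x < n \<and> pm x (mu x) < pm x (mu' x)}"
    by (intro image_eqI[of _ _ y]) auto
  then have "v \<in> mu ` {x. x < n \<and> pm x (mu x) < pm x (mu' x)}"
    using better_men_same_women[OF st st'] by simp
  then obtain z' where z': "z' < n" "pm z' (mu z') < pm z' (mu' z')" "mu z' = v"
    by blast
  have "z' = z" using matching_eq_iff[OF mu z'(1) z(1)] z'(3) z(2) by simp
  with z' have "pm z v < pm z (mu' z)" by simp
  then have "pw v (wpartner n mu' v) \<le> pw v z" using stable_no_blocking[OF st' z(1) v] z(2) by simp
  moreover have "wpartner n mu' v = y" using wpartner_matching[OF mu' y] y' by simp
  ultimately show False using zx v_prefers by simp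
qed

lemma men_worse_stable:
  assumes st: "stable n pm pw mu" and st': "stable n pm pw mu'"
  shows "stable n pm pw (men_worse pm mu mu')"
proof -
  let ?X = "men_worse pm mu mu'"
  have X: "matching n ?X" using men_worse_matching[OF st st'] .
  have "\<not> blocking n pm pw ?X x v" for x v
  proof
    assume "blocking n pm pw ?X x v"
    then have x: "x < n" and v: "v < n" and x_prefers: "pm x v < pm x (?X x)"
      and v_prefers: "pw v x < pw v (wpartner n ?X v)" unfolding blocking_def by auto
    define y where "y = wpartner n ?X v"
    have y: "y < n" "?X y = v"
      unfolding y_def using wpartner_less[OF X v] matching_wpartner[OF X v] by auto
    have y_worse: "pm y (mu y) \<le> pm y v" "pm y (mu' y) \<le> pm y v"
      using men_worse_rank[where pm = pm and mu = mu and mu' = mu' and x = y] y(2) by simp_all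
    have y_matched: "mu y = v \<or> mu' y = v"
      using men_worse_cases[where pm = pm and mu = mu and mu' = mu' and x = y] y(2) by auto
    consider "pm x v < pm x (mu x)" | "pm x v < pm x (mu' x)"
      using x_prefers men_worse_cases[where pm = pm and mu = mu and mu' = mu' and x = x] by force
    then show False
    proof cases
      case 1
      show False
        using not_blocked_by_worse_partner[OF st st' x v y(1) 1 _ y_matched y_worse(1)]
          v_prefers y_def
        by simp
    next
      case 2
      show False
        using not_blocked_by_worse_partner[OF st' st x v y(1) 2 _ _ y_worse(2)] v_prefers y_def
          y_matched by blast
    qed
  qed
  with X show ?thesis unfolding stable_def by blast
qed

lemma women_better_if_men_worse:
  assumes stX: "stable n pm pw X" and mu: "matching n mu"
    and worse: "\<And>x. x < n \<Longrightarrow> pm x (mu x) \<le> pm x (X x)" and v: "v < n"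
  shows "pw v (wpartner n X v) \<le> pw v (wpartner n mu v)"
proof (cases "wpartner n mu v = wpartner n X v")
  case False
  have X: "matching n X" using stX by (rule stable_matching)
  define z where "z = wpartner n mu v"
  have z: "z < n" "mu z = v"
    unfolding z_def using wpartner_less[OF mu v] matching_wpartner[OF mu v] by auto
  have "X z \<noteq> v" using False wpartner_matching[OF X z(1)] z_def by metis
  then have "pm z v < pm z (X z)"
    using pm_less[OF z(1) v matching_less[OF X z(1)]] worse[OF z(1)] z(2) by simp
  then show ?thesis using stable_no_blocking[OF stX z(1) v] z_def by simp
qed simp

end

section \<open>Rotations\<close>

lemma cyclic_invariant:
  fixes l :: nat
  assumes "i < l" "P i" "\<And>j. j < l \<Longrightarrow> P j \<Longrightarrow> P (Suc j mod l)" "j < l"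
  shows "P j"
proof -
  have "P ((i + d) mod l)" for d
  proof (induction d)
    case 0
    show ?case using assms(1,2) by simp
  next
    case (Suc d)
    have "(i + d) mod l < l" using assms(1) by simp
    from assms(3)[OF this Suc.IH] show ?case by (simp add: mod_Suc_eq)
  qed
  from this[of "j + l - i"] show ?thesis using assms(1,4) by simp
qed

lemma cyclic_predecessor:
  fixes l :: nat
  assumes "j < l"
  shows "\<exists>i<l. Suc i mod l = j"
proof (cases j)
  case 0
  with assms show ?thesis by (intro exI[of _ "l - 1"]) auto
next
  case (Suc i)
  with assms show ?thesis by (intro exI[of _ i]) auto
qed

lemma rotation_inD:
  assumes "rotation_in n pm pw mu ps"
  shows "stable n pm pw mu" "ps \<noteq> []" "distinct (map fst ps)"
    and "i < length ps \<Longrightarrow> fst (ps ! i) < n"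
    and "i < length ps \<Longrightarrow> mu (fst (ps ! i)) = snd (ps ! i)"
  using assms unfolding rotation_in_def by auto

lemma rotation_in_pairD:
  assumes r: "rotation_in n pm pw mu ps" and p: "(m, w) \<in> set ps"
  shows "m < n" "w < n" "mu m = w"
proof -
  obtain j where j: "j < length ps" "ps ! j = (m, w)" using p by (auto simp: in_set_conv_nth)
  show m: "m < n" and mw: "mu m = w" using rotation_inD(4,5)[OF r j(1)] j(2) by auto
  show "w < n" using matching_less[OF stable_matching[OF rotation_inD(1)[OF r]] m] mw by simp
qed

lemma rotation_in_step:
  assumes "rotation_in n pm pw mu ps" "i < length ps"
  shows "pm (fst (ps ! i)) (snd (ps ! i)) < pm (fst (ps ! i)) (snd (ps ! (Suc i mod length ps)))"
    and "pw (snd (ps ! (Suc i mod length ps))) (fst (ps ! i))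
      < pw (snd (ps ! (Suc i mod length ps))) (wpartner n mu (snd (ps ! (Suc i mod length ps))))"
    and "v < n \<Longrightarrow> pm (fst (ps ! i)) (snd (ps ! i)) < pm (fst (ps ! i)) v \<Longrightarrow>
      pw v (fst (ps ! i)) < pw v (wpartner n mu v) \<Longrightarrow>
      pm (fst (ps ! i)) (snd (ps ! (Suc i mod length ps))) \<le> pm (fst (ps ! i)) v"
  using assms unfolding rotation_in_def Let_def by auto

lemma rotation_in_next:
  assumes r: "rotation_in n pm pw mu ps" and i: "i < length ps"
  shows "Suc i mod length ps < length ps"
    and "wpartner n mu (snd (ps ! (Suc i mod length ps))) = fst (ps ! (Suc i mod length ps))"
    and "fst (ps ! (Suc i mod length ps)) \<noteq> fst (ps ! i)"
proof -
  show j: "Suc i mod length ps < length ps"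
    using mod_less_divisor[of "length ps" "Suc i"] i by linarith
  show "wpartner n mu (snd (ps ! (Suc i mod length ps))) = fst (ps ! (Suc i mod length ps))"
    using rotation_inD(4,5)[OF r j] wpartner_matching[OF stable_matching[OF rotation_inD(1)[OF r]]]
    by metis
  have "Suc i mod length ps \<noteq> i" using rotation_in_step(1)[OF r i] by auto
  then show "fst (ps ! (Suc i mod length ps)) \<noteq> fst (ps ! i)"
    using rotation_inD(3)[OF r] j i by (simp add: nth_eq_iff_index_eq[symmetric])
qed

context sm_instance
begin

lemma woman_above_rotation_successor_prefers_partner:
  assumes r: "rotation_in n pm pw mu ps" and j: "j < length ps" and v: "v < n"
    and before: "pm (fst (ps ! j)) v < pm (fst (ps ! j)) (snd (ps ! (Suc j mod length ps)))"
    and not_partner: "v \<noteq> snd (ps ! j)"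
  shows "pw v (wpartner n mu v) < pw v (fst (ps ! j))"
proof -
  have st: "stable n pm pw mu" using rotation_inD(1)[OF r] .
  have mu: "matching n mu" using stable_matching[OF st] .
  define x where "x = fst (ps ! j)"
  define w where "w = snd (ps ! j)"
  define u where "u = wpartner n mu v"
  have x: "x < n" "mu x = w" using rotation_inD(4,5)[OF r j] x_def w_def by auto
  have w: "w < n" using matching_less[OF mu x(1)] x(2) by simp
  have u: "u < n" "mu u = v"
    unfolding u_def using wpartner_less[OF mu v] matching_wpartner[OF mu v] by auto
  have "u \<noteq> x" using u(2) x(2) not_partner w_def by auto
  have "pw v u \<le> pw v x"
  proof (cases "pm x v < pm x w")
    case True
    then show ?thesis using stable_no_blocking[OF st x(1) v] x(2) u_def by simp
  next
    case False
    then have "pm x w < pm x v" using pm_less[OF x(1) w v] not_partner w_def by simp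
    then have "\<not> pw v x < pw v u"
      using rotation_in_step(3)[OF r j v] before x_def w_def u_def by fastforce
    then show ?thesis by simp
  qed
  then show ?thesis using pw_less[OF v u(1) x(1)] \<open>u \<noteq> x\<close> x_def u_def by simp
qed

lemma rotation_next_rank_le_men_worse:
  assumes r: "rotation_in n pm pw mu ps" and stX: "stable n pm pw X"
    and worse: "\<And>x. x < n \<Longrightarrow> pm x (mu x) \<le> pm x (X x)"
    and j: "j < length ps" and lost: "X (fst (ps ! j)) \<noteq> snd (ps ! j)"
  shows "pm (fst (ps ! j)) (snd (ps ! (Suc j mod length ps)))
    \<le> pm (fst (ps ! j)) (X (fst (ps ! j)))"
proof (rule ccontr)
  define m where "m = fst (ps ! j)"
  define w where "w = snd (ps ! j)"
  define v where "v = X m"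
  have mu: "matching n mu" and X: "matching n X"
    using stable_matching rotation_inD(1)[OF r] stX by auto
  have m: "m < n" "mu m = w" using rotation_inD(4,5)[OF r j] m_def w_def by auto
  have v: "v < n" using matching_less[OF X m(1)] v_def by simp
  have "v \<noteq> w" using lost m_def w_def v_def by simp
  then have m_worse: "pm m w < pm m v"
    using pm_less[OF m(1) _ v] worse[OF m(1)] m v_def matching_less[OF mu m(1)] by simp
  assume "\<not> ?thesis"
  then have "\<not> pw v m < pw v (wpartner n mu v)"
    using rotation_in_step(3)[OF r j v] m_worse m_def w_def v_def by auto
  define u where "u = wpartner n mu v"
  have u: "u < n" "mu u = v"
    unfolding u_def using wpartner_less[OF mu v] matching_wpartner[OF mu v] by auto
  have "u \<noteq> m" using u(2) m(2) \<open>v \<noteq> w\<close> by auto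
  then have v_prefers: "pw v u < pw v m"
    using pw_less[OF v u(1) m(1)] \<open>\<not> pw v m < pw v (wpartner n mu v)\<close> u_def by simp
  have "X u \<noteq> v" using matching_eq_iff[OF X u(1) m(1)] \<open>u \<noteq> m\<close> v_def by simp
  then have "pm u v < pm u (X u)"
    using pm_less[OF u(1) v matching_less[OF X u(1)]] worse[OF u(1)] u(2) by simp
  then have "pw v (wpartner n X v) \<le> pw v u" by (rule stable_no_blocking[OF stX u(1) v])
  with v_prefers show False using wpartner_matching[OF X m(1)] v_def by simp
qed

lemma rotation_pair_lost_propagates:
  assumes r: "rotation_in n pm pw mu ps" and stX: "stable n pm pw X"
    and worse: "\<And>x. x < n \<Longrightarrow> pm x (mu x) \<le> pm x (X x)"
    and j: "j < length ps" and lost: "X (fst (ps ! j)) \<noteq> snd (ps ! j)"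
  shows "X (fst (ps ! (Suc j mod length ps))) \<noteq> snd (ps ! (Suc j mod length ps))"
proof
  define j' where "j' = Suc j mod length ps"
  define m where "m = fst (ps ! j)"
  define m' where "m' = fst (ps ! j')"
  define w' where "w' = snd (ps ! j')"
  assume "X (fst (ps ! (Suc j mod length ps))) = snd (ps ! (Suc j mod length ps))"
  then have kept: "X m' = w'" unfolding m'_def w'_def j'_def .
  have mu: "matching n mu" and X: "matching n X"
    using stable_matching rotation_inD(1)[OF r] stX by auto
  have j': "j' < length ps" using rotation_in_next(1)[OF r j] j'_def by simp
  have m: "m < n" using rotation_inD(4)[OF r j] m_def by simp
  have m': "m' < n" "mu m' = w'" using rotation_inD(4,5)[OF r j'] m'_def w'_def by auto
  have w': "w' < n" using matching_less[OF mu m'(1)] m'(2) by simp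
  have "m' \<noteq> m" using rotation_in_next(3)[OF r j] m_def m'_def j'_def by simp
  then have "X m \<noteq> w'" using kept matching_eq_iff[OF X m m'(1)] by auto
  moreover have "pm m w' \<le> pm m (X m)"
    using rotation_next_rank_le_men_worse[OF r stX worse j lost] m_def w'_def j'_def by simp
  ultimately have "pm m w' < pm m (X m)" using pm_less[OF m w' matching_less[OF X m]] by simp
  then have "pw w' (wpartner n X w') \<le> pw w' m" by (rule stable_no_blocking[OF stX m w'])
  moreover have "wpartner n X w' = wpartner n mu w'"
    using wpartner_matching[OF X m'(1)] wpartner_matching[OF mu m'(1)] kept m'(2) by simp
  moreover have "pw w' m < pw w' (wpartner n mu w')"
    using rotation_in_step(2)[OF r j] m_def w'_def j'_def by simp
  ultimately show False by simp
qed

lemma rotation_all_or_none: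
  assumes r: "rotation_in n pm pw mu ps" and stX: "stable n pm pw X"
    and worse: "\<And>x. x < n \<Longrightarrow> pm x (mu x) \<le> pm x (X x)"
    and i: "i < length ps" and kept: "X (fst (ps ! i)) = snd (ps ! i)"
    and j: "j < length ps"
  shows "X (fst (ps ! j)) = snd (ps ! j)"
proof (rule ccontr)
  assume "X (fst (ps ! j)) \<noteq> snd (ps ! j)"
  with j have "X (fst (ps ! i)) \<noteq> snd (ps ! i)"
    by (rule cyclic_invariant[where P = "\<lambda>j. X (fst (ps ! j)) \<noteq> snd (ps ! j)"])
      (use rotation_pair_lost_propagates[OF r stX worse] i in auto)
  with kept show False by simp
qed

lemma rotation_in_transfer:
  assumes r: "rotation_in n pm pw mu ps" and stX: "stable n pm pw X"
    and worse: "\<And>x. x < n \<Longrightarrow> pm x (mu x) \<le> pm x (X x)"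
    and kept: "\<And>j. j < length ps \<Longrightarrow> X (fst (ps ! j)) = snd (ps ! j)"
  shows "rotation_in n pm pw X ps"
proof -
  have mu: "matching n mu" and X: "matching n X"
    using stable_matching rotation_inD(1)[OF r] stX by auto
  have "let m = fst (ps ! i); w = snd (ps ! i); w' = snd (ps ! (Suc i mod length ps)) in
      pm m w < pm m w' \<and> pw w' m < pw w' (wpartner n X w') \<and>
      (\<forall>v<n. pm m w < pm m v \<and> pw v m < pw v (wpartner n X v) \<longrightarrow> pm m w' \<le> pm m v)"
    if i: "i < length ps" for i
  proof -
    let ?j = "Suc i mod length ps"
    have j: "?j < length ps" using rotation_in_next(1)[OF r i] .
    have "wpartner n X (snd (ps ! ?j)) = fst (ps ! ?j)"
      using kept[OF j] wpartner_matching[OF X rotation_inD(4)[OF r j]] by simp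
    then have same: "wpartner n X (snd (ps ! ?j)) = wpartner n mu (snd (ps ! ?j))"
      using rotation_in_next(2)[OF r i] by simp
    have "pw v (fst (ps ! i)) < pw v (wpartner n mu v)"
      if "v < n" "pw v (fst (ps ! i)) < pw v (wpartner n X v)" for v
      using that women_better_if_men_worse[OF stX mu worse] by (meson order_less_le_trans)
    then show ?thesis
      unfolding Let_def using rotation_in_step[OF r i] same by auto
  qed
  then show ?thesis
    using stX rotation_inD[OF r] kept unfolding rotation_in_def by auto
qed

lemma rotation_in_next_man_eq:
  assumes r: "rotation_in n pm pw X ps" and q: "rotation_in n pm pw X qs"
    and i: "i < length ps" and i': "i' < length qs" and same: "fst (ps ! i) = fst (qs ! i')"
  shows "fst (ps ! (Suc i mod length ps)) = fst (qs ! (Suc i' mod length qs))"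
proof -
  have X: "matching n X" using stable_matching rotation_inD(1)[OF r] by auto
  define x where "x = fst (ps ! i)"
  define v where "v = snd (ps ! (Suc i mod length ps))"
  define v' where "v' = snd (qs ! (Suc i' mod length qs))"
  have x: "x < n" using rotation_inD(4)[OF r i] x_def by simp
  have "snd (ps ! i) = snd (qs ! i')"
    using rotation_inD(5)[OF r i] rotation_inD(5)[OF q i'] same by metis
  then have step_p: "pm x (snd (qs ! i')) < pm x v" "pw v x < pw v (wpartner n X v)"
    and step_q: "pm x (snd (qs ! i')) < pm x v'" "pw v' x < pw v' (wpartner n X v')"
    using rotation_in_step(1,2)[OF r i] rotation_in_step(1,2)[OF q i'] same x_def v_def v'_def
    by auto
  have v: "v < n" and v': "v' < n"
    using rotation_inD(4,5)[OF r rotation_in_next(1)[OF r i]]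
      rotation_inD(4,5)[OF q rotation_in_next(1)[OF q i']]
      matching_less[OF X] v_def v'_def by metis+
  have "pm x v \<le> pm x v'"
    using rotation_in_step(3)[OF r i v'] step_q \<open>snd (ps ! i) = snd (qs ! i')\<close> x_def v_def by simp
  moreover have "pm x v' \<le> pm x v"
    using rotation_in_step(3)[OF q i' v] step_p \<open>snd (ps ! i) = snd (qs ! i')\<close> same x_def v'_def
    by simp
  ultimately have "v = v'" using pm_inj[OF x v v'] by simp
  then show ?thesis
    using rotation_in_next(2)[OF r i] rotation_in_next(2)[OF q i'] v_def v'_def by simp
qed

lemma rotation_in_same_matching_subset:
  assumes r: "rotation_in n pm pw X ps" and q: "rotation_in n pm pw X qs"
    and p: "p \<in> set ps" "p \<in> set qs"
  shows "set ps \<subseteq> set qs"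
proof
  fix p' assume "p' \<in> set ps"
  then obtain a where a: "a < length ps" "ps ! a = p'" by (auto simp: in_set_conv_nth)
  obtain i where i: "i < length ps" "ps ! i = p" using p(1) by (auto simp: in_set_conv_nth)
  have "ps ! a \<in> set qs"
  proof (rule cyclic_invariant[where P = "\<lambda>a. ps ! a \<in> set qs", OF i(1) _ _ a(1)])
    show "ps ! i \<in> set qs" using i(2) p(2) by simp
    fix b assume b: "b < length ps" and "ps ! b \<in> set qs"
    then obtain b' where b': "b' < length qs" "qs ! b' = ps ! b" by (auto simp: in_set_conv_nth)
    let ?c = "Suc b mod length ps" and ?c' = "Suc b' mod length qs"
    have c: "?c < length ps" and c': "?c' < length qs"
      using rotation_in_next(1)[OF r b] rotation_in_next(1)[OF q b'(1)] .
    have "fst (ps ! ?c) = fst (qs ! ?c')"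
      using rotation_in_next_man_eq[OF r q b b'(1)] b'(2) by simp
    moreover from this have "snd (ps ! ?c) = snd (qs ! ?c')"
      using rotation_inD(5)[OF r c] rotation_inD(5)[OF q c'] by metis
    ultimately have "ps ! ?c = qs ! ?c'" by (simp add: prod_eq_iff)
    with c' show "ps ! ?c \<in> set qs" by simp
  qed
  with a(2) show "p' \<in> set qs" by simp
qed

lemma rotation_in_common_pair:
  assumes r: "rotation_in n pm pw mu ps" and q: "rotation_in n pm pw mu' qs"
    and p: "p \<in> set ps" "p \<in> set qs"
  shows "set ps = set qs"
proof -
  have st: "stable n pm pw mu" and st': "stable n pm pw mu'"
    using rotation_inD(1) r q by auto
  let ?X = "men_worse pm mu mu'"
  have stX: "stable n pm pw ?X" using men_worse_stable[OF st st'] .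
  obtain i where i: "i < length ps" "ps ! i = p" using p(1) by (auto simp: in_set_conv_nth)
  obtain i' where i': "i' < length qs" "qs ! i' = p" using p(2) by (auto simp: in_set_conv_nth)
  have "mu (fst p) = snd p" "mu' (fst p) = snd p"
    using rotation_inD(5)[OF r i(1)] rotation_inD(5)[OF q i'(1)] i(2) i'(2) by auto
  then have "?X (fst p) = snd p" unfolding men_worse_def by simp
  then have "rotation_in n pm pw ?X ps" "rotation_in n pm pw ?X qs"
    using rotation_in_transfer[OF r stX men_worse_rank(1)]
      rotation_in_transfer[OF q stX men_worse_rank(2)]
      rotation_all_or_none[OF r stX men_worse_rank(1) i(1)]
      rotation_all_or_none[OF q stX men_worse_rank(2) i'(1)]
      i(2) i'(2) by auto
  then show ?thesis using rotation_in_same_matching_subset p by blast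
qed

lemma rotations_disjoint:
  assumes "rotation n pm pw R" "rotation n pm pw R'" "p \<in> R" "p \<in> R'"
  shows "R = R'"
  using assms rotation_in_common_pair unfolding rotation_def by blast

lemma card_rotations_le:
  assumes "finite Q" and meets: "\<And>R. rotation n pm pw R \<Longrightarrow> P R \<Longrightarrow> R \<inter> Q \<noteq> {}"
  shows "card {R. rotation n pm pw R \<and> P R} \<le> card Q"
proof -
  let ?pick = "\<lambda>R. SOME p. p \<in> R \<inter> Q"
  have pick: "?pick R \<in> R \<inter> Q" if "rotation n pm pw R" "P R" for R
    using meets[OF that] some_in_eq[of "R \<inter> Q"] by blast
  show ?thesis
  proof (rule card_inj_on_le[OF _ _ assms(1)])
    show "inj_on ?pick {R. rotation n pm pw R \<and> P R}"
      using pick rotations_disjoint by (intro inj_onI) (metis IntD1 mem_Collect_eq)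
    show "?pick ` {R. rotation n pm pw R \<and> P R} \<subseteq> Q"
      using pick by blast
  qed
qed

end

section \<open>Preferences of bounded range\<close>

lemma k_range_swap: "k_range n pm pw k = k_range n pw pm k"
  unfolding k_range_def minrank_man_def maxrank_man_def minrank_woman_def maxrank_woman_def
  by auto

lemma k_range_rank_le:
  assumes "k_range n pm pw k" "x < n" "v < n"
  shows "pw v x + 1 \<le> minrank_man n pw x + k"
proof -
  have "pw v x \<le> maxrank_man n pw x"
    unfolding maxrank_man_def by (rule Max_ge) (use assms in auto)
  with assms show ?thesis unfolding k_range_def by fastforce
qed

locale k_range_instance = sm_instance +
  fixes k :: nat
  assumes bounded_range: "k_range n pm pw k"

sublocale k_range_instance \<subseteq> swap: k_range_instance n pw pm k
  by unfold_locales (use pref_women pref_men bounded_range k_range_swap in auto)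

context k_range_instance
begin

lemma k_pos: "x < n \<Longrightarrow> 1 \<le> k"
  using k_range_rank_le[OF bounded_range, of x x] minrank_man_le[of x n pw x] by linarith

lemma minrank_le_if_preferred:
  assumes "x < n" "u < n" "v < n" "pw v u < pw v x"
  shows "minrank_man n pw u + 2 \<le> minrank_man n pw x + k"
  using assms minrank_man_le[of v n pw u] k_range_rank_le[OF bounded_range, of x v] by linarith

lemma card_minrank_le: "card {u. u < n \<and> minrank_man n pw u \<le> c} \<le> c + k - 1"
proof (cases "n = 0")
  case False
  then have "{u. u < n \<and> minrank_man n pw u \<le> c} \<subseteq> {u. u < n \<and> pw 0 u \<in> {1..c + k - 1}}"
    using pref_rank_range[OF pref_women] k_range_rank_le[OF bounded_range, of _ 0] by fastforce
  then have "card {u. u < n \<and> minrank_man n pw u \<le> c} \<le> card {u. u < n \<and> pw 0 u \<in> {1..c + k - 1}}"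
    by (rule card_mono[rotated]) simp
  also have "\<dots> \<le> card {1..c + k - 1}"
    using False by (intro card_pref_rank_in[OF pref_women]) auto
  finally show ?thesis by simp
qed simp

lemma rank_le_by_partner_minranks:
  assumes mu: "matching n mu" and x: "x < n" and r: "r \<le> n"
    and partners: "\<And>v. v < n \<Longrightarrow> pm x v < r \<Longrightarrow>
      minrank_man n pw (wpartner n mu v) + 2 \<le> minrank_man n pw x + k"
  shows "r + 2 \<le> minrank_man n pw x + 2 * k"
proof -
  let ?S = "{v. v < n \<and> pm x v < r}"
  let ?c = "minrank_man n pw x + k - 2"
  have "r - 1 = card ?S"
    using card_pref_rank_less[OF pref_men x] r by simp
  also have "\<dots> = card (wpartner n mu ` ?S)"
    using matching_wpartner[OF mu] by (intro card_image[symmetric] inj_onI) (metis mem_Collect_eq)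
  also have "\<dots> \<le> card {u. u < n \<and> minrank_man n pw u \<le> ?c}"
    using partners wpartner_less[OF mu] by (intro card_mono) fastforce+
  also have "\<dots> \<le> ?c + k - 1"
    by (rule card_minrank_le)
  finally show ?thesis
    using minrank_man_pos[OF pref_women x] k_pos[OF x] by linarith
qed

lemma stable_partner_rank_upper:
  assumes st: "stable n pm pw mu" and x: "x < n"
  shows "pm x (mu x) + 2 \<le> minrank_man n pw x + 2 * k"
proof (rule rank_le_by_partner_minranks[OF stable_matching[OF st] x])
  have mu: "matching n mu" using st by (rule stable_matching)
  show "pm x (mu x) \<le> n"
    using pref_rank_range[OF pref_men x matching_less[OF mu x]] by simp
  fix v assume v: "v < n" and better: "pm x v < pm x (mu x)"
  let ?u = "wpartner n mu v"
  have u: "?u < n" "mu ?u = v"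
    using v wpartner_less[OF mu] matching_wpartner[OF mu] by auto
  with better have "?u \<noteq> x" by auto
  moreover have "pw v ?u \<le> pw v x"
    using stable_no_blocking[OF st x v better] .
  ultimately have "pw v ?u < pw v x"
    using pw_less[OF v u(1) x] by simp
  then show "minrank_man n pw ?u + 2 \<le> minrank_man n pw x + k"
    using minrank_le_if_preferred[OF x u(1) v] by simp
qed

end

(* A fresh context block makes the swap instances of the lemmas above, such as
   swap.stable_partner_rank_upper, available. *)
context k_range_instance
begin

lemma stable_partner_rank_lower:
  assumes st: "stable n pm pw mu" and x: "x < n"
  shows "minrank_man n pw x + 2 \<le> pm x (mu x) + 2 * k"
proof -
  have mu: "matching n mu" using st by (rule stable_matching)
  let ?v = "mu x"
  have v: "?v < n" using matching_less[OF mu x] .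
  have "pw ?v (wpartner n mu ?v) + 2 \<le> minrank_man n pm ?v + 2 * k"
    using swap.stable_partner_rank_upper[OF stable_swap[OF st] v] .
  then have "pw ?v x + 2 \<le> minrank_man n pm ?v + 2 * k"
    by (simp add: wpartner_matching[OF mu x])
  then show ?thesis
    using minrank_man_le[OF v, of pw x] minrank_man_le[OF x, of pm ?v] by linarith
qed

lemma card_stable_partners_man:
  assumes m: "m < n"
  shows "card (stable_partners_man n pm pw m) \<le> 4 * k - 3"
proof -
  let ?a = "minrank_man n pw m"
  let ?W = "{?a + 2 - 2 * k .. ?a + 2 * k - 2}"
  have "stable_partners_man n pm pw m \<subseteq> {w. w < n \<and> pm m w \<in> ?W}"
  proof
    fix w assume "w \<in> stable_partners_man n pm pw m"
    then obtain mu where st: "stable n pm pw mu" and w: "mu m = w"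
      unfolding stable_partners_man_def by blast
    then show "w \<in> {w. w < n \<and> pm m w \<in> ?W}"
      using stable_partner_rank_upper[OF st m] stable_partner_rank_lower[OF st m]
        matching_less[OF stable_matching[OF st] m] by auto
  qed
  then have "card (stable_partners_man n pm pw m) \<le> card {w. w < n \<and> pm m w \<in> ?W}"
    by (rule card_mono[rotated]) simp
  also have "\<dots> \<le> card ?W"
    by (rule card_pref_rank_in[OF pref_men m]) simp
  finally show ?thesis
    using k_pos[OF m] by simp
qed

lemma no_rotation_if_k_eq_1:
  assumes k: "k = 1"
  shows "\<not> rotation_in n pm pw mu ps"
proof
  assume r: "rotation_in n pm pw mu ps"
  have mu: "matching n mu" using stable_matching rotation_inD(1)[OF r] by auto
  have same_rank: "pw v x = minrank_man n pw x" if "x < n" "v < n" for x v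
    using k_range_rank_le[OF bounded_range that] minrank_man_le[OF that(2), of pw x] k by linarith
  define f where "f i = minrank_man n pw (fst (ps ! i))" for i
  let ?l = "length ps"
  have increasing: "f i < f (Suc i mod ?l)" if i: "i < ?l" for i
  proof -
    let ?j = "Suc i mod ?l"
    have j: "?j < ?l" using rotation_in_next(1)[OF r i] .
    have w: "snd (ps ! ?j) < n"
      using rotation_inD(4,5)[OF r j] matching_less[OF mu] by metis
    have "pw (snd (ps ! ?j)) (fst (ps ! i)) < pw (snd (ps ! ?j)) (fst (ps ! ?j))"
      using rotation_in_step(2)[OF r i] rotation_in_next(2)[OF r i] by simp
    then show ?thesis
      unfolding f_def using same_rank w rotation_inD(4)[OF r i] rotation_inD(4)[OF r j] by simp
  qed
  have "Max (f ` {..<?l}) \<in> f ` {..<?l}"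
    using rotation_inD(2)[OF r] by (intro Max_in) auto
  then obtain j where j: "j < ?l" "f j = Max (f ` {..<?l})" by auto
  have "f (Suc j mod ?l) \<le> f j"
    using j(2) rotation_in_next(1)[OF r j(1)] by simp
  with increasing[OF j(1)] show False by simp
qed

lemma rotation_next_rank_upper:
  assumes r: "rotation_in n pm pw mu ps" and j: "j < length ps"
  shows "pm (fst (ps ! j)) (snd (ps ! (Suc j mod length ps))) + 2
    \<le> minrank_man n pw (fst (ps ! j)) + 2 * k"
proof -
  have mu: "matching n mu" using stable_matching[OF rotation_inD(1)[OF r]] .
  define x where "x = fst (ps ! j)"
  define w' where "w' = snd (ps ! (Suc j mod length ps))"
  have x: "x < n" "mu x = snd (ps ! j)" using rotation_inD(4,5)[OF r j] x_def by auto
  have w': "w' < n"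
    using rotation_inD(4,5)[OF r rotation_in_next(1)[OF r j]] matching_less[OF mu] w'_def by metis
  have "k \<noteq> 1" using no_rotation_if_k_eq_1 r by blast
  then have k2: "2 \<le> k" using k_pos[OF x(1)] by simp
  have "pm x w' + 2 \<le> minrank_man n pw x + 2 * k"
  proof (rule rank_le_by_partner_minranks[OF mu x(1)])
    show "pm x w' \<le> n" using pref_rank_range(2)[OF pref_men x(1) w'] .
    fix v assume v: "v < n" and before: "pm x v < pm x w'"
    show "minrank_man n pw (wpartner n mu v) + 2 \<le> minrank_man n pw x + k"
    proof (cases "v = snd (ps ! j)")
      case True
      then have "wpartner n mu v = x" using wpartner_matching[OF mu x(1)] x(2) by simp
      with k2 show ?thesis by simp
    next
      case False
      then have "pw v (wpartner n mu v) < pw v x"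
        using woman_above_rotation_successor_prefers_partner[OF r j v] before x_def w'_def by simp
      then show ?thesis
        using minrank_le_if_preferred[OF x(1) wpartner_less[OF mu v] v] by simp
    qed
  qed
  then show ?thesis using x_def w'_def by simp
qed

lemma rotation_man_window:
  assumes r: "rotation_in n pm pw mu ps" and p: "(m, w) \<in> set ps"
  shows "minrank_man n pw m + 2 \<le> pm m w + 2 * k" "pm m w + 3 \<le> minrank_man n pw m + 2 * k"
proof -
  obtain j where j: "j < length ps" "ps ! j = (m, w)" using p by (auto simp: in_set_conv_nth)
  note mw = rotation_in_pairD[OF r p]
  show "minrank_man n pw m + 2 \<le> pm m w + 2 * k"
    using stable_partner_rank_lower[OF rotation_inD(1)[OF r] mw(1)] mw(3) by simp
  show "pm m w + 3 \<le> minrank_man n pw m + 2 * k"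
    using rotation_in_step(1)[OF r j(1)] rotation_next_rank_upper[OF r j(1)] j(2) by simp
qed

lemma rotation_woman_window:
  assumes r: "rotation_in n pm pw mu ps" and p: "(x, w) \<in> set ps"
  shows "minrank_man n pm w + 3 \<le> pw w x + 2 * k" "pw w x + 2 \<le> minrank_man n pm w + 2 * k"
proof -
  have st: "stable n pm pw mu" using rotation_inD(1)[OF r] .
  note xw = rotation_in_pairD[OF r p]
  have wx: "wpartner n mu w = x"
    using wpartner_matching[OF stable_matching[OF st] xw(1)] xw(3) by simp
  show "pw w x + 2 \<le> minrank_man n pm w + 2 * k"
    using swap.stable_partner_rank_upper[OF stable_swap[OF st] xw(2)] wx by simp
  obtain j where j: "j < length ps" "ps ! j = (x, w)" using p by (auto simp: in_set_conv_nth)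
  obtain i where i: "i < length ps" "Suc i mod length ps = j"
    using cyclic_predecessor[OF j(1)] by blast
  define m' where "m' = fst (ps ! i)"
  have m': "m' < n" using rotation_inD(4)[OF r i(1)] m'_def by simp
  have "pw w m' < pw w x"
    using rotation_in_step(2)[OF r i(1)] i(2) j(2) wx m'_def by simp
  moreover have "pm m' w + 2 \<le> minrank_man n pw m' + 2 * k"
    using rotation_next_rank_upper[OF r i(1)] i(2) j(2) m'_def by simp
  moreover have "minrank_man n pm w \<le> pm m' w" using minrank_man_le[OF m'] .
  moreover have "minrank_man n pw m' \<le> pw w m'" using minrank_man_le[OF xw(2)] .
  ultimately show "minrank_man n pm w + 3 \<le> pw w x + 2 * k" by linarith
qed

lemma card_rotations_man:
  assumes m: "m < n"
  shows "card {R. rotation n pm pw R \<and> m \<in> fst ` R} \<le> 4 * k - 4"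
proof -
  let ?a = "minrank_man n pw m"
  let ?W = "{?a + 2 - 2 * k .. ?a + 2 * k - 3}"
  let ?Q = "Pair m ` {w. w < n \<and> pm m w \<in> ?W}"
  have "card {R. rotation n pm pw R \<and> m \<in> fst ` R} \<le> card ?Q"
  proof (rule card_rotations_le)
    fix R assume "rotation n pm pw R" "m \<in> fst ` R"
    then obtain mu ps w where r: "rotation_in n pm pw mu ps" and p: "(m, w) \<in> set ps" "set ps = R"
      unfolding rotation_def by force
    then have "(m, w) \<in> ?Q"
      using rotation_man_window[OF r p(1)] rotation_in_pairD(2)[OF r p(1)] by auto
    with p show "R \<inter> ?Q \<noteq> {}" by blast
  qed simp
  also have "\<dots> \<le> card {w. w < n \<and> pm m w \<in> ?W}" by (rule card_image_le) simp
  also have "\<dots> \<le> card ?W" by (rule card_pref_rank_in[OF pref_men m]) simp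
  also have "\<dots> \<le> 4 * k - 4"
    using minrank_man_pos[OF pref_women m] k_pos[OF m] by simp
  finally show ?thesis .
qed

lemma card_rotations_woman:
  assumes w: "w < n"
  shows "card {R. rotation n pm pw R \<and> w \<in> snd ` R} \<le> 4 * k - 4"
proof -
  let ?b = "minrank_man n pm w"
  let ?W = "{?b + 3 - 2 * k .. ?b + 2 * k - 2}"
  let ?Q = "(\<lambda>x. (x, w)) ` {x. x < n \<and> pw w x \<in> ?W}"
  have "card {R. rotation n pm pw R \<and> w \<in> snd ` R} \<le> card ?Q"
  proof (rule card_rotations_le)
    fix R assume "rotation n pm pw R" "w \<in> snd ` R"
    then obtain mu ps x where r: "rotation_in n pm pw mu ps" and p: "(x, w) \<in> set ps" "set ps = R"
      unfolding rotation_def by force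
    then have "(x, w) \<in> ?Q"
      using rotation_woman_window[OF r p(1)] rotation_in_pairD(1)[OF r p(1)] by auto
    with p show "R \<inter> ?Q \<noteq> {}" by blast
  qed simp
  also have "\<dots> \<le> card {x. x < n \<and> pw w x \<in> ?W}" by (rule card_image_le) simp
  also have "\<dots> \<le> card ?W" by (rule card_pref_rank_in[OF pref_women w]) simp
  also have "\<dots> \<le> 4 * k - 4" by simp
  finally show ?thesis .
qed

end

theorem corollary7p5:
  fixes n k :: nat and pm pw :: "nat \<Rightarrow> nat \<Rightarrow> nat"
  assumes "pref_profile n pm" and "pref_profile n pw" and "k_range n pm pw k"
  shows "(\<forall>m<n. int (card (stable_partners_man n pm pw m)) \<le> 5 * int k - 4 \<and>
                 int (card {R. rotation n pm pw R \<and> m \<in> fst ` R}) \<le> 5 * int k - 5) \<and>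
         (\<forall>w<n. int (card (stable_partners_woman n pm pw w)) \<le> 5 * int k - 4 \<and>
                 int (card {R. rotation n pm pw R \<and> w \<in> snd ` R}) \<le> 5 * int k - 5)"
proof -
  interpret k_range_instance n pm pw k
    using assms by unfold_locales
  have "int c \<le> 5 * int k - 4" if "c \<le> 4 * k - 3" "1 \<le> k" for c
    using that by linarith
  moreover have "int c \<le> 5 * int k - 5" if "c \<le> 4 * k - 4" "1 \<le> k" for c
    using that by linarith
  ultimately show ?thesis
    using card_stable_partners_man swap.card_stable_partners_man stable_partners_woman_swap
      card_rotations_man card_rotations_woman k_pos by auto
qed

end
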